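(* For all real $x\ge4$, $H(x)\log(H(x))<\dfrac{x^2}{x+\frac{6}{\pi^2}}$.
   Context: $H(x)=\int_0^1\frac{t^x-1}{t-1}\,dt$ for real $x\ge1$; it satisfies $H(n)=1+\frac12+\cdots+\frac1n$ for $n\in\mathbb{N}$ and $H(x)=\psi(x+1)+\gamma$ with $\psi=\Gamma'/\Gamma$ the digamma function. *)

theory Defs
  imports "HOL-Analysis.Analysis"
begin

definition H :: "real \<Rightarrow> real" where
  "H x = integral {0..1} (\<lambda>t. (t powr x - 1) / (t - 1))"

end

theory Submission
  imports Defs
begin

text \<open>
  On \<open>[0, 1)\<close> the integrand \<open>(1 - t^x)/(1 - t)\<close> lies between \<open>1\<close> and
  \<open>min (1/(1 - t)) x\<close>, the second bound by Bernoulli's inequality. Splitting the integral of the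
  majorant at \<open>t = 1 - 1/x\<close> gives \<open>1 \<le> H(x) \<le> 1 + ln x\<close>. The tangent bound
  \<open>ln h \<le> h/2 - 1/4\<close> (tangent at \<open>h = 2\<close>, using \<open>ln 2 < 3/4\<close>) together with
  \<open>x \<ge> 1 + ln x + (ln x)\<^sup>2/2\<close> then yields \<open>H(x) ln H(x) < x - 2/3\<close>, and
  \<open>x - 2/3 < x - 6/\<pi>\<^sup>2 \<le> x\<^sup>2/(x + 6/\<pi>\<^sup>2)\<close> since \<open>\<pi>\<^sup>2 > 9\<close>.
\<close>

lemma powr_ge_tangent_at_one:
  fixes x t :: real
  assumes "x \<ge> 1" "0 < t"
  shows "x * (t - 1) \<le> t powr x - 1"
proof -
  have "(\<lambda>t. t powr x) t - (\<lambda>t. t powr x) 1 \<ge> (x * 1 powr (x - 1)) * (t - 1)"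
  proof (rule convex_on_imp_above_tangent[where A="{0<..}"])
    show "convex_on {0<..} (\<lambda>t. t powr x)"
      using powr_convex assms by blast
    show "((\<lambda>t. t powr x) has_field_derivative x * 1 powr (x - 1)) (at 1 within {0<..})"
      by (rule derivative_eq_intros | simp)+
  qed (use assms in \<open>auto simp: interior_open\<close>)
  then show ?thesis by simp
qed

lemma harmonic_integrand_bounds:
  fixes x t :: real
  assumes x: "x \<ge> 1" and t: "0 \<le> t" "t < 1"
  shows "1 \<le> (t powr x - 1) / (t - 1)"
    and "(t powr x - 1) / (t - 1) \<le> (if t \<le> 1 - 1/x then 1 / (1 - t) else x)"
proof -
  have eq: "(t powr x - 1) / (t - 1) = (1 - t powr x) / (1 - t)"
    by (metis minus_diff_eq minus_divide_divide)
  have "t powr x \<le> t"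
  proof (cases "t = 0")
    case False
    then have "t powr x \<le> t powr 1"
      using x t by (intro powr_mono') auto
    then show ?thesis
      using t False by simp
  qed simp
  then show "1 \<le> (t powr x - 1) / (t - 1)"
    using t by (simp add: eq field_simps)
  show "(t powr x - 1) / (t - 1) \<le> (if t \<le> 1 - 1/x then 1 / (1 - t) else x)"
  proof (cases "t \<le> 1 - 1/x")
    case True
    then show ?thesis
      using t by (simp add: eq divide_right_mono)
  next
    case False
    have "0 \<le> 1 - 1/x"
      using x by simp
    then have "0 < t"
      using False by linarith
    then have "1 - t powr x \<le> x * (1 - t)"
      using powr_ge_tangent_at_one[OF x] by (simp add: algebra_simps)
    then show ?thesis
      using False t by (simp add: eq field_simps)
  qed
qed

lemma has_integral_harmonic_majorant:
  fixes x :: real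
  assumes "x \<ge> 1"
  shows "((\<lambda>t. if t \<le> 1 - 1/x then 1 / (1 - t) else x) has_integral ln x + 1) {0..1}"
proof -
  define c where "c = 1 - 1/x"
  have c: "0 \<le> c" "c < 1"
    using assms by (auto simp: c_def field_simps)
  have "((\<lambda>t. 1 / (1 - t)) has_integral (- ln (1 - c)) - (- ln (1 - 0))) {0..c}"
  proof (rule fundamental_theorem_of_calculus)
    fix t assume "t \<in> {0..c}"
    then have "t < 1" using c by auto
    then show "((\<lambda>t. - ln (1 - t)) has_vector_derivative 1 / (1 - t)) (at t within {0..c})"
      unfolding has_real_derivative_iff_has_vector_derivative [symmetric]
      by (auto intro!: derivative_eq_intros simp: field_simps)
  qed (use c in auto)
  moreover have "- ln (1 - c) = ln x"
    using assms by (simp add: c_def ln_div)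
  ultimately have left: "((\<lambda>t. if t \<le> c then 1 / (1 - t) else x) has_integral ln x) {0..c}"
    by (subst has_integral_cong[where g="\<lambda>t. 1 / (1 - t)"]) auto
  have const: "((\<lambda>t. x) has_integral x * (1 - c)) {c..1}"
    using has_integral_const_real[of x c 1] c by (simp add: mult.commute)
  have "((\<lambda>t. if t \<le> c then 1 / (1 - t) else x) has_integral x * (1 - c)) {c..1}"
    by (rule has_integral_spike_finite[OF _ _ const, of "{c}"]) auto
  moreover have "x * (1 - c) = 1"
    using assms by (simp add: c_def)
  ultimately have right: "((\<lambda>t. if t \<le> c then 1 / (1 - t) else x) has_integral 1) {c..1}"
    by simp
  show ?thesis
    using has_integral_combine[OF c(1) _ left right] c by (simp add: c_def)
qed

lemma harmonic_integrand_integrable: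
  fixes x :: real
  assumes "x \<ge> 1"
  shows "(\<lambda>t. (t powr x - 1) / (t - 1)) integrable_on {0..1}"
proof (rule measurable_bounded_by_integrable_imp_integrable_real)
  have "(\<lambda>t::real. (t powr x - 1) / (t - 1)) \<in> borel_measurable borel"
    by measurable
  then show "(\<lambda>t::real. (t powr x - 1) / (t - 1)) \<in> borel_measurable (lebesgue_on {0..1})"
    by (simp add: measurable_completion measurable_restrict_space1)
  show "(\<lambda>t. if t \<le> 1 - 1/x then 1 / (1 - t) else x) integrable_on {0..1}"
    using has_integral_harmonic_majorant[OF assms] by blast
  fix t :: real
  assume "t \<in> {0..1}"
  then consider "0 \<le> t" "t < 1" | "t = 1" by fastforce
  then show "\<bar>(t powr x - 1) / (t - 1)\<bar> \<le> (if t \<le> 1 - 1/x then 1 / (1 - t) else x)"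
  proof cases
    case 1
    then show ?thesis
      using harmonic_integrand_bounds[OF assms 1] by linarith
  qed (use assms in auto)
qed (simp add: borel_closed)

lemma H_ge_one:
  assumes "x \<ge> 1"
  shows "1 \<le> H x"
proof -
  define f where "f = (\<lambda>t::real. (t powr x - 1) / (t - 1))"
  \<comment> \<open>\<open>f 1 = 0\<close> by division by zero, so compare with \<open>f\<close> patched at the single point \<open>1\<close>.\<close>
  have H_eq: "H x = integral {0..1} (f(1 := 1))"
    unfolding H_def f_def[symmetric] by (rule integral_spike[of "{1}"]) auto
  have patched_integrable: "(f(1 := 1)) integrable_on {0..1}"
    by (rule integrable_spike[OF harmonic_integrand_integrable[OF assms], of "{1}"])
      (auto simp: f_def)
  have "integral {0..1} (\<lambda>t::real. 1::real) \<le> integral {0..1} (f(1 := 1))"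
    by (rule integral_le[OF integrable_const_ivl patched_integrable])
      (use harmonic_integrand_bounds(1)[OF assms] in \<open>auto simp: f_def\<close>)
  then show ?thesis
    by (simp add: H_eq)
qed

lemma H_le_ln_plus_one:
  assumes "x \<ge> 1"
  shows "H x \<le> ln x + 1"
proof -
  have "H x \<le> integral {0..1} (\<lambda>t. if t \<le> 1 - 1/x then 1 / (1 - t) else x)"
    unfolding H_def
  proof (rule integral_le[OF harmonic_integrand_integrable[OF assms]])
    show "(\<lambda>t. if t \<le> 1 - 1/x then 1 / (1 - t) else x) integrable_on {0..1}"
      using has_integral_harmonic_majorant[OF assms] by blast
    fix t :: real
    assume "t \<in> {0..1}"
    then consider "0 \<le> t" "t < 1" | "t = 1" by fastforce
    then show "(t powr x - 1) / (t - 1) \<le> (if t \<le> 1 - 1/x then 1 / (1 - t) else x)"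
      by cases (use harmonic_integrand_bounds(2)[OF assms] assms in auto)
  qed
  also have "\<dots> = ln x + 1"
    using has_integral_harmonic_majorant[OF assms] by (rule integral_unique)
  finally show ?thesis .
qed

lemma ln_le_half_minus_quarter:
  fixes h :: real
  assumes "0 < h"
  shows "ln h \<le> h / 2 - 1 / 4"
proof -
  have "1 + 3/4 + (3/4)\<^sup>2 / 2 \<le> exp (3/4 :: real)"
    by (rule exp_lower_Taylor_quadratic) simp
  then have "2 \<le> exp (3/4 :: real)"
    by (simp add: power2_eq_square)
  then have "ln 2 \<le> (3/4 :: real)"
    by (metis exp_gt_zero ln_exp ln_le_cancel_iff zero_less_numeral)
  moreover have "ln h = ln 2 + ln (h / 2)"
    using assms by (simp add: ln_div)
  ultimately show ?thesis
    using ln_le_minus_one[of "h / 2"] assms by simp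
qed

lemma mult_ln_lt_minus_two_thirds:
  fixes x h :: real
  assumes "x \<ge> 1" "1 \<le> h" "h \<le> ln x + 1"
  shows "h * ln h < x - 2/3"
proof -
  have "h * ln h \<le> h * (h / 2 - 1 / 4)"
    using ln_le_half_minus_quarter[of h] assms by (intro mult_left_mono) auto
  also have "\<dots> \<le> (ln x + 1) * ((ln x + 1) / 2 - 1 / 4)"
  proof -
    have "0 \<le> ((ln x + 1) - h) * (((ln x + 1) + h) / 2 - 1 / 4)"
      using assms by (intro mult_nonneg_nonneg) auto
    then show ?thesis by (simp add: field_simps)
  qed
  also have "\<dots> < x - 2/3"
  proof -
    have L: "0 \<le> ln x"
      using assms by simp
    have "1 + ln x + (ln x)\<^sup>2 / 2 \<le> exp (ln x)"
      by (rule exp_lower_Taylor_quadratic[OF L])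
    then have "1 + ln x + (ln x)\<^sup>2 / 2 \<le> x"
      using assms by simp
    then show ?thesis
      using L by (simp add: power2_eq_square algebra_simps) argo
  qed
  finally show ?thesis .
qed

lemma six_div_pi_squared_lt: "6 / pi\<^sup>2 < 2/3"
proof -
  have "3\<^sup>2 < pi\<^sup>2"
    using pi_gt3 by (intro power_strict_mono) auto
  then show ?thesis
    by (simp add: divide_simps)
qed

lemma diff_le_square_div_add:
  fixes x a :: real
  assumes "0 < x + a"
  shows "x - a \<le> x\<^sup>2 / (x + a)"
proof -
  have "(x - a) * (x + a) \<le> x\<^sup>2"
    by (simp add: algebra_simps power2_eq_square)
  then show ?thesis
    using assms by (simp add: le_divide_eq)
qed

theorem mainTheorem15:
  fixes x :: real
  assumes "x \<ge> 4"
  shows "H x * ln (H x) < x^2 / (x + 6 / pi^2)"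
proof -
  have x: "x \<ge> 1"
    using assms by simp
  have "H x * ln (H x) < x - 2/3"
    using mult_ln_lt_minus_two_thirds[OF x H_ge_one[OF x] H_le_ln_plus_one[OF x]] .
  also have "\<dots> < x - 6 / pi\<^sup>2"
    using six_div_pi_squared_lt by simp
  also have "\<dots> \<le> x\<^sup>2 / (x + 6 / pi\<^sup>2)"
    using x by (intro diff_le_square_div_add add_pos_pos) auto
  finally show ?thesis .
qed

end
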